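(* Let $n,v,s,t$ be integers with $1\le v\le s\le t\le n$, let $u=\lceil s/v\rceil$, assume $uv\le n$, and put $n_0=n-u(v-1)$. Let $\mathfrak{P}=\{\mathcal{P}_1,\dots,\mathcal{P}_S\}$ be a $u$-complete collection of $v$-partitions of $[n]$, $\mathcal{P}_i=\{P^i_1,\dots,P^i_v\}$, such that every part satisfies $|P^i_j|\le n_0$ (this is the case, e.g., when $S=S(n,u,v)$ is minimal). Let $\mathcal{C}_0$ be a systematic linear $(u,t)$-batch code over $\mathbb{F}_q$ of dimension $n_0$ and redundancy $r_0$, with (linear) encoder $\mathcal{E}_0:\mathbb{F}_q^{n_0}\to\mathbb{F}_q^{r_0}$ such that $(\mathbf{x},\mathcal{E}_0(\mathbf{x}))\in\mathcal{C}_0$ for all $\mathbf{x}$. Define $\mathcal{E}:\mathbb{F}_q^n\to\mathbb{F}_q^{vSr_0}$ by $$\mathcal{E}(\mathbf{x})=\big(\mathcal{E}_0(\mathbf{x}|_{P^1_1},\mathbf{0}),\dots,\mathcal{E}_0(\mathbf{x}|_{P^1_v},\mathbf{0}),\dots,\mathcal{E}_0(\mathbf{x}|_{P^S_1},\mathbf{0}),\dots,\mathcal{E}_0(\mathbf{x}|_{P^S_v},\mathbf{0})\big),$$ where $\mathbf{x}|_P$ lists the coordinates of $\mathbf{x}$ indexed by $P$ in increasing order and $(\mathbf{x}|_P,\mathbf{0})\in\mathbb{F}_q^{n_0}$ is obtained by appending zeros. Then $\mathcal{C}=\{(\mathbf{x},\mathcal{E}(\mathbf{x})):\mathbf{x}\in\mathbb{F}_q^n\}$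 is an $(s,t)$-batch code of dimension $n$ and redundancy $v\cdot S\cdot r_0$.
   Context: $[m]=\{1,\dots,m\}$. A linear code $\mathcal{C}\subseteq\mathbb{F}^N$ of dimension $n$ is systematic if for every $\mathbf{x}\in\mathbb{F}^n$ there is a unique codeword whose first $n$ coordinates equal $\mathbf{x}$. A set $R\subseteq[N]$ is a recovering set for $i\in[n]$ if there are scalars $\lambda_k$ ($k\in R$) with $\mathbf{c}(i)=\sum_{k\in R}\lambda_k\mathbf{c}(k)$ for all $\mathbf{c}\in\mathcal{C}$. $(s,t)$-batch code ($1\le s\le t$): a systematic linear code $\mathcal{C}\subseteq\mathbb{F}^N$ of dimension $n$ such that for every choice of indices $i_1,\dots,i_s\in[n]$ (not necessarily distinct) and nonnegative integers $a_1,\dots,a_s$ with $\sum_j a_j=t$, there exist $t$ pairwise disjoint sets $R_{j,l}\subseteq[N]$ ($j\in[s]$, $l\in[a_j]$), each a recovering set for $i_j$. Redundancy is $N-n$. A $v$-partition of $[n]$ is a partition of $[n]$ into $v$ sets $P_1,\dots,P_v$ (for this definition parts may be empty). A $uv$-subset $I\subseteq[n]$ is covered by the $v$-partition $\{P_1,\dots,P_v\}$ if $|P_i\cap I|=u$ for all $i\in[v]$. A collection of $v$-partitions of $[n]$ is $u$-complete if every $uv$-subset of $[n]$ is covered by some member of the collection. $S(n,u,v)$ is the minimum cardinality of a $u$-complete collection of $v$-partitions of $[n]$ (for $uv\le n$). *)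

theory Defs
  imports Complex_Main
begin

text \<open>Vectors in F^N are lists of length N; coordinates are 1-based as in the paper:
  coordinate k of c is c ! (k - 1), for k in {1..N}.\<close>

definition linear_code :: "nat \<Rightarrow> ('a::field) list set \<Rightarrow> bool" where
  "linear_code N C \<longleftrightarrow> C \<subseteq> {c. length c = N} \<and> replicate N 0 \<in> C \<and>
     (\<forall>c\<in>C. \<forall>d\<in>C. map2 (+) c d \<in> C) \<and> (\<forall>a. \<forall>c\<in>C. map ((*) a) c \<in> C)"

definition systematic :: "nat \<Rightarrow> nat \<Rightarrow> ('a::field) list set \<Rightarrow> bool" where
  "systematic N n C \<longleftrightarrow> linear_code N C \<and> n \<le> N \<and>
     (\<forall>x. length x = n \<longrightarrow> (\<exists>!c. c \<in> C \<and> take n c = x))"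

definition recovering_set :: "nat \<Rightarrow> ('a::field) list set \<Rightarrow> nat \<Rightarrow> nat set \<Rightarrow> bool" where
  "recovering_set N C i R \<longleftrightarrow> R \<subseteq> {1..N} \<and>
     (\<exists>lam::nat \<Rightarrow> 'a. \<forall>c\<in>C. c ! (i - 1) = (\<Sum>k\<in>R. lam k * c ! (k - 1)))"

text \<open>(s,t)-batch code of length N and dimension n (redundancy N - n).\<close>
definition batch_code :: "nat \<Rightarrow> nat \<Rightarrow> nat \<Rightarrow> nat \<Rightarrow> ('a::field) list set \<Rightarrow> bool" where
  "batch_code s t N n C \<longleftrightarrow> 1 \<le> s \<and> s \<le> t \<and> systematic N n C \<and>
     (\<forall>(ii::nat \<Rightarrow> nat) (a::nat \<Rightarrow> nat).
        (\<forall>j\<in>{1..s}. ii j \<in> {1..n}) \<longrightarrow> (\<Sum>j=1..s. a j) = t \<longrightarrow>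
        (\<exists>R::nat \<Rightarrow> nat \<Rightarrow> nat set.
           (\<forall>j\<in>{1..s}. \<forall>l\<in>{1..a j}. recovering_set N C (ii j) (R j l)) \<and>
           (\<forall>j\<in>{1..s}. \<forall>l\<in>{1..a j}. \<forall>j'\<in>{1..s}. \<forall>l'\<in>{1..a j'}.
               (j, l) \<noteq> (j', l') \<longrightarrow> R j l \<inter> R j' l' = {})))"

text \<open>A v-partition of [n], indexed by {1..v}; parts may be empty.\<close>
definition v_partition :: "nat \<Rightarrow> nat \<Rightarrow> (nat \<Rightarrow> nat set) \<Rightarrow> bool" where
  "v_partition n v P \<longleftrightarrow> (\<Union>j\<in>{1..v}. P j) = {1..n} \<and>
     (\<forall>j\<in>{1..v}. \<forall>j'\<in>{1..v}. j \<noteq> j' \<longrightarrow> P j \<inter> P j' = {})"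

definition covers :: "nat \<Rightarrow> nat \<Rightarrow> (nat \<Rightarrow> nat set) \<Rightarrow> nat set \<Rightarrow> bool" where
  "covers u v P I \<longleftrightarrow> (\<forall>j\<in>{1..v}. card (P j \<inter> I) = u)"

definition u_complete :: "nat \<Rightarrow> nat \<Rightarrow> nat \<Rightarrow> nat \<Rightarrow> (nat \<Rightarrow> nat \<Rightarrow> nat set) \<Rightarrow> bool" where
  "u_complete n u v S Ps \<longleftrightarrow> (\<forall>i\<in>{1..S}. v_partition n v (Ps i)) \<and>
     (\<forall>I. I \<subseteq> {1..n} \<and> card I = u * v \<longrightarrow> (\<exists>i\<in>{1..S}. covers u v (Ps i) I))"

definition restrict_vec :: "'a list \<Rightarrow> nat set \<Rightarrow> 'a list" where
  "restrict_vec x P = map (\<lambda>k. x ! (k - 1)) (sorted_list_of_set P)"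

definition pad_zeros :: "nat \<Rightarrow> ('a::zero) list \<Rightarrow> 'a list" where
  "pad_zeros m xs = xs @ replicate (m - length xs) 0"

definition construct_encoder ::
  "nat \<Rightarrow> nat \<Rightarrow> nat \<Rightarrow> (nat \<Rightarrow> nat \<Rightarrow> nat set) \<Rightarrow> (('a::field) list \<Rightarrow> 'a list) \<Rightarrow> 'a list \<Rightarrow> 'a list" where
  "construct_encoder n0 v S Ps E0 x =
     concat [E0 (pad_zeros n0 (restrict_vec x (Ps i j))). i \<leftarrow> [1..<S+1], j \<leftarrow> [1..<v+1]]"

end

theory Submission
  imports Defs "HOL-Library.Disjoint_Sets"
begin

text \<open>At most \<open>s \<le> u v\<close> distinct symbols are requested; extend them to a \<open>uv\<close>-set \<open>I\<close>
  and pick a partition \<open>P\<^sub>1, \<dots>, P\<^sub>v\<close> of the collection covering \<open>I\<close>. Every part then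
  contains at most \<open>u\<close> requested symbols, so the \<open>(u,t)\<close>-batch code \<open>C\<^sub>0\<close> serves the
  requests in \<open>P\<^sub>j\<close> from its codeword \<open>(x|P\<^sub>j, 0, E\<^sub>0(x|P\<^sub>j, 0))\<close>. Each coordinate
  of that codeword is zero or a coordinate of \<open>(x, E x)\<close>, so the recovering sets transfer
  to \<open>C\<close>, and for different parts they live on the disjoint coordinate sets
  \<open>P\<^sub>j \<union> (block of E\<^sub>0(x|P\<^sub>j, 0))\<close>.\<close>

section \<open>Lists, restriction and padding\<close>

lemma map2_concat_map:
  assumes "\<And>z. z \<in> set zs \<Longrightarrow> length (f z) = length (g z)"
  shows "map2 h (concat (map f zs)) (concat (map g zs)) = concat (map (\<lambda>z. map2 h (f z) (g z)) zs)"
  using assms by (induct zs) auto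

lemma length_concat_const:
  assumes "\<And>xs. xs \<in> set xss \<Longrightarrow> length xs = r"
  shows "length (concat xss) = length xss * r"
  using assms by (induct xss) auto

lemma nth_concat_const:
  assumes "\<And>xs. xs \<in> set xss \<Longrightarrow> length xs = r" and "b < length xss" and "k < r"
  shows "concat xss ! (b * r + k) = xss ! b ! k"
  using assms
proof (induct xss arbitrary: b)
  case (Cons xs xss)
  then show ?case by (cases b) (auto simp: nth_append)
qed simp

lemma set_upt_1: "set [1..<k+1] = {1..k}"
  by auto

lemma mult_add_less_mult:
  assumes "j < (v::nat)" and "k < r"
  shows "j * r + k < v * r"
proof -
  have "j * r + k < Suc j * r" using assms(2) by simp
  also have "\<dots> \<le> v * r" using assms(1) by (intro mult_le_mono1) simp
  finally show ?thesis .
qed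

lemma disjoint_blocks:
  assumes "b \<noteq> (b'::nat)"
  shows "{c + b * r <.. c + b * r + r} \<inter> {c + b' * r <.. c + b' * r + r} = {}"
proof -
  have "{c + b * r <.. c + b * r + r} \<inter> {c + b' * r <.. c + b' * r + r} = {}" if "b < b'" for b b'
  proof -
    have "b * r + r \<le> b' * r" using that by (metis Suc_leI add.commute mult_Suc mult_le_mono1)
    then show ?thesis by auto
  qed
  then show ?thesis using assms by (metis Int_commute linorder_neq_iff)
qed

lemma image_nth_pred_atLeastAtMost: "(\<lambda>m. xs ! (m - 1)) ` {1..length xs} = set xs"
proof
  show "(\<lambda>m. xs ! (m - 1)) ` {1..length xs} \<subseteq> set xs" by auto
  show "set xs \<subseteq> (\<lambda>m. xs ! (m - 1)) ` {1..length xs}"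
  proof
    fix z assume "z \<in> set xs"
    then obtain k where "k < length xs" "z = xs ! k" by (auto simp: in_set_conv_nth)
    then show "z \<in> (\<lambda>m. xs ! (m - 1)) ` {1..length xs}" by (intro image_eqI[of _ _ "Suc k"]) auto
  qed
qed

lemma image_shift_greaterThanAtMost: "(\<lambda>m. c + (m - a)) ` {a<..a + r} = {c<..c + (r::nat)}"
proof
  show "(\<lambda>m. c + (m - a)) ` {a<..a + r} \<subseteq> {c<..c + r}" by auto
  show "{c<..c + r} \<subseteq> (\<lambda>m. c + (m - a)) ` {a<..a + r}"
  proof
    fix x assume "x \<in> {c<..c + r}"
    then show "x \<in> (\<lambda>m. c + (m - a)) ` {a<..a + r}" by (intro image_eqI[of _ _ "x - c + a"]) auto
  qed
qed

lemma length_restrict_vec: "finite P \<Longrightarrow> length (restrict_vec x P) = card P"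
  unfolding restrict_vec_def by simp

lemma nth_restrict_vec:
  "finite P \<Longrightarrow> m < card P \<Longrightarrow> restrict_vec x P ! m = x ! (sorted_list_of_set P ! m - 1)"
  unfolding restrict_vec_def by simp

lemma restrict_vec_map:
  assumes "P \<subseteq> {1..length x}"
  shows "restrict_vec (map f x) P = map f (restrict_vec x P)"
proof -
  have "k - 1 < length x" if "k \<in> set (sorted_list_of_set P)" for k
    using that assms by (cases "finite P") (auto simp: subset_iff)
  then show ?thesis unfolding restrict_vec_def by simp
qed

lemma restrict_vec_map2:
  assumes "P \<subseteq> {1..length x}" and "length y = length x"
  shows "restrict_vec (map2 f x y) P = map2 f (restrict_vec x P) (restrict_vec y P)"
proof -
  have "k - 1 < length x" if "k \<in> set (sorted_list_of_set P)" for k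
    using that assms by (cases "finite P") (auto simp: subset_iff)
  then show ?thesis unfolding restrict_vec_def map2_map_map using assms(2) by simp
qed

lemma length_pad_zeros: "length xs \<le> m \<Longrightarrow> length (pad_zeros m xs) = m"
  unfolding pad_zeros_def by simp

lemma nth_pad_zeros: "k < m \<Longrightarrow> pad_zeros m xs ! k = (if k < length xs then xs ! k else 0)"
  unfolding pad_zeros_def by (simp add: nth_append)

lemma pad_zeros_map: "f 0 = 0 \<Longrightarrow> pad_zeros m (map f xs) = map f (pad_zeros m xs)"
  unfolding pad_zeros_def by simp

lemma pad_zeros_map2:
  "length xs = length ys \<Longrightarrow> f 0 0 = 0 \<Longrightarrow>
   pad_zeros m (map2 f xs ys) = map2 f (pad_zeros m xs) (pad_zeros m ys)"
  unfolding pad_zeros_def by (simp add: map_replicate_const)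

section \<open>Systematic codes\<close>

lemma systematic_redundancy_unique:
  assumes "systematic N n C" and "length x = n" and "x @ e \<in> C" and "x @ e' \<in> C"
  shows "e = e'"
proof -
  have "\<exists>!c. c \<in> C \<and> take n c = x" using assms(1,2) unfolding systematic_def by blast
  moreover have "take n (x @ e) = x" "take n (x @ e') = x" using assms(2) by simp_all
  ultimately have "x @ e = x @ e'" using assms(3,4) by blast
  then show ?thesis by simp
qed

lemma systematic_encoder_add:
  fixes C :: "'a::field list set"
  assumes sys: "systematic N n C" and enc: "\<forall>x. length x = n \<longrightarrow> x @ E x \<in> C"
    and "length x = n" and "length y = n"
  shows "E (map2 (+) x y) = map2 (+) (E x) (E y)"
proof (rule systematic_redundancy_unique[OF sys])
  have "\<forall>c\<in>C. \<forall>d\<in>C. map2 (+) c d \<in> C"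
    using sys unfolding systematic_def linear_code_def by blast
  moreover have "x @ E x \<in> C" "y @ E y \<in> C" using enc assms(3,4) by simp_all
  ultimately have "map2 (+) (x @ E x) (y @ E y) \<in> C" by blast
  then show "map2 (+) x y @ map2 (+) (E x) (E y) \<in> C" using assms(3,4) by simp
  show "map2 (+) x y @ E (map2 (+) x y) \<in> C" using enc assms(3,4) by simp
qed (use assms in simp)

lemma systematic_encoder_scale:
  fixes C :: "'a::field list set"
  assumes sys: "systematic N n C" and enc: "\<forall>x. length x = n \<longrightarrow> x @ E x \<in> C"
    and "length x = n"
  shows "E (map ((*) a) x) = map ((*) a) (E x)"
proof (rule systematic_redundancy_unique[OF sys])
  have "\<forall>c\<in>C. map ((*) a) c \<in> C"
    using sys unfolding systematic_def linear_code_def by blast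
  moreover have "x @ E x \<in> C" using enc assms(3) by simp
  ultimately have "map ((*) a) (x @ E x) \<in> C" by blast
  then show "map ((*) a) x @ map ((*) a) (E x) \<in> C" by simp
  show "map ((*) a) x @ E (map ((*) a) x) \<in> C" using enc assms(3) by simp
qed (use assms in simp)

lemma systematic_graph:
  fixes E :: "'a::field list \<Rightarrow> 'a list"
  assumes len: "\<And>x. length x = n \<Longrightarrow> length (E x) = r"
    and add: "\<And>x y. length x = n \<Longrightarrow> length y = n \<Longrightarrow> E (map2 (+) x y) = map2 (+) (E x) (E y)"
    and scale: "\<And>a x. length x = n \<Longrightarrow> E (map ((*) a) x) = map ((*) a) (E x)"
  shows "systematic (n + r) n {x @ E x | x. length x = n}"
proof -
  have "E (replicate n 0) = map ((*) 0) (E (map ((*) 0) (replicate n 0)))"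
    using scale[of "replicate n 0" 0] by simp
  also have "\<dots> = replicate r 0"
  proof -
    have "map ((*) 0) ys = replicate (length ys) (0::'a)" for ys by (induct ys) auto
    then show ?thesis using len[of "map ((*) 0) (replicate n 0)"] by simp
  qed
  finally have "replicate (n + r) 0 = replicate n 0 @ E (replicate n 0)"
    by (simp add: replicate_add)
  then have zero: "replicate (n + r) 0 \<in> {x @ E x | x. length x = n}" by force
  show ?thesis unfolding systematic_def linear_code_def
  proof (intro conjI ballI allI impI zero)
    fix c d assume "c \<in> {x @ E x | x. length x = n}" "d \<in> {x @ E x | x. length x = n}"
    then obtain x y where "length x = n" "length y = n" "c = x @ E x" "d = y @ E y" by blast
    then show "map2 (+) c d \<in> {x @ E x | x. length x = n}"
      using len add by (intro CollectI exI[of _ "map2 (+) x y"]) simp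
  next
    fix a c assume "c \<in> {x @ E x | x. length x = n}"
    then obtain x where "length x = n" "c = x @ E x" by blast
    then show "map ((*) a) c \<in> {x @ E x | x. length x = n}"
      using scale by (intro CollectI exI[of _ "map ((*) a) x"]) simp
  next
    fix x :: "'a list" assume "length x = n"
    then show "\<exists>!c. c \<in> {x @ E x | x. length x = n} \<and> take n c = x"
      by (intro ex1I[of _ "x @ E x"]) auto
  next
    show "{x @ E x | x. length x = n} \<subseteq> {c. length c = n + r}" using len by auto
  qed simp
qed

section \<open>Disjoint recovering sets\<close>

definition disjoint_recovering_sets ::
  "nat \<Rightarrow> 'a::field list set \<Rightarrow> ('q \<Rightarrow> nat) \<Rightarrow> 'q set \<Rightarrow> ('q \<Rightarrow> nat set) \<Rightarrow> bool" where
  "disjoint_recovering_sets N C g Q R \<longleftrightarrow>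
     (\<forall>q\<in>Q. recovering_set N C (g q) (R q)) \<and> disjoint_family_on R Q"

lemma batch_code_iff:
  "batch_code s t N n C \<longleftrightarrow> 1 \<le> s \<and> s \<le> t \<and> systematic N n C \<and>
     (\<forall>ii a. (\<forall>j\<in>{1..s}. ii j \<in> {1..n}) \<longrightarrow> (\<Sum>j=1..s. a j) = t \<longrightarrow>
        (\<exists>R. disjoint_recovering_sets N C (ii \<circ> fst) (SIGMA j:{1..s}. {1..a j}) R))"
proof -
  have requests_iff: "(\<exists>R. (\<forall>j\<in>{1..s}. \<forall>l\<in>{1..a j}. recovering_set N C (ii j) (R j l)) \<and>
           (\<forall>j\<in>{1..s}. \<forall>l\<in>{1..a j}. \<forall>j'\<in>{1..s}. \<forall>l'\<in>{1..a j'}.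
              (j, l) \<noteq> (j', l') \<longrightarrow> R j l \<inter> R j' l' = {}))
     \<longleftrightarrow> (\<exists>R. disjoint_recovering_sets N C (ii \<circ> fst) (SIGMA j:{1..s}. {1..a j}) R)"
    (is "(\<exists>R. ?P R) \<longleftrightarrow> (\<exists>R. ?Q R)") for ii a
  proof
    assume "\<exists>R. ?P R" then obtain R where "?P R" by blast
    then show "\<exists>R. ?Q R" by (intro exI[of _ "case_prod R"])
        (fastforce simp: disjoint_recovering_sets_def disjoint_family_on_def)
  next
    assume "\<exists>R. ?Q R" then obtain R where "?Q R" by blast
    then show "\<exists>R. ?P R" by (intro exI[of _ "curry R"])
        (fastforce simp: disjoint_recovering_sets_def disjoint_family_on_def)
  qed
  show ?thesis unfolding batch_code_def requests_iff ..
qed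

lemma batch_codeI:
  assumes "1 \<le> s" and "s \<le> t" and "systematic N n C"
    and recover: "\<And>(Q :: (nat \<times> nat) set) g. finite Q \<Longrightarrow> card Q \<le> t \<Longrightarrow> card (g ` Q) \<le> s \<Longrightarrow>
                    g ` Q \<subseteq> {1..n} \<Longrightarrow> \<exists>R. disjoint_recovering_sets N C g Q R"
  shows "batch_code s t N n C"
  unfolding batch_code_iff
proof (intro conjI allI impI assms(1-3))
  fix ii a :: "nat \<Rightarrow> nat"
  assume requests: "\<forall>j\<in>{1..s}. ii j \<in> {1..n}" and total: "(\<Sum>j=1..s. a j) = t"
  have "card ((ii \<circ> fst) ` (SIGMA j:{1..s}. {1..a j})) \<le> card (ii ` {1..s})"
    by (rule card_mono) auto
  also have "\<dots> \<le> s" using card_image_le[of "{1..s}" ii] by simp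
  finally show "\<exists>R. disjoint_recovering_sets N C (ii \<circ> fst) (SIGMA j:{1..s}. {1..a j}) R"
    using requests total by (intro recover) auto
qed

lemma disjoint_recovering_sets_reindex:
  assumes "disjoint_recovering_sets N C g' Q' R'" and "inj_on \<kappa> Q" and "\<kappa> ` Q \<subseteq> Q'"
    and "\<And>q. q \<in> Q \<Longrightarrow> g' (\<kappa> q) = g q"
  shows "disjoint_recovering_sets N C g Q (R' \<circ> \<kappa>)"
  using assms unfolding disjoint_recovering_sets_def disjoint_family_on_def inj_on_def
  by (metis comp_apply image_subset_iff)

lemma fibre_ranking:
  fixes g :: "'q \<Rightarrow> 'b"
  assumes "finite Q"
  obtains h where "\<And>q. q \<in> Q \<Longrightarrow> h q \<in> {1..card {q'\<in>Q. g q' = g q}}"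
    and "inj_on (\<lambda>q. (g q, h q)) Q"
proof -
  have "\<forall>z. \<exists>h. bij_betw h {q\<in>Q. g q = z} {1..card {q\<in>Q. g q = z}}"
    using assms by (auto intro: finite_same_card_bij)
  then obtain hz where hz: "\<And>z. bij_betw (hz z) {q\<in>Q. g q = z} {1..card {q\<in>Q. g q = z}}"
    by metis
  show ?thesis
  proof
    show "hz (g q) q \<in> {1..card {q'\<in>Q. g q' = g q}}" if "q \<in> Q" for q
      using bij_betw_apply[OF hz] that by blast
    show "inj_on (\<lambda>q. (g q, hz (g q) q)) Q"
      using hz unfolding bij_betw_def inj_on_def by auto
  qed
qed

lemma sum_card_fibres: "finite Q \<Longrightarrow> (\<Sum>z\<in>g ` Q. card {q\<in>Q. g q = z}) = card Q"
  using sum.image_gen[of Q "\<lambda>_. 1::nat" g] by simp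

lemma batch_code_recovers:
  fixes g :: "'q \<Rightarrow> nat"
  assumes bc: "batch_code u t N n C" and fin: "finite Q" and "card Q \<le> t"
    and "card (g ` Q) \<le> u" and "g ` Q \<subseteq> {1..n}"
  shows "\<exists>R. disjoint_recovering_sets N C g Q R"
proof (cases "Q = {}")
  case True
  then show ?thesis by (simp add: disjoint_recovering_sets_def disjoint_family_on_def)
next
  case False
  define d where "d = card (g ` Q)"
  define fibre where "fibre z = {q\<in>Q. g q = z}" for z
  have d: "1 \<le> d" "d \<le> u" using False fin assms(4) by (auto simp: d_def Suc_le_eq)
  obtain e where e: "bij_betw e {1..d} (g ` Q)"
    using ex_bij_betw_nat_finite_1 fin d_def by blast
  obtain h where h: "\<And>q. q \<in> Q \<Longrightarrow> h q \<in> {1..card (fibre (g q))}"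
    and inj: "inj_on (\<lambda>q. (g q, h q)) Q"
    using fibre_ranking[OF fin] unfolding fibre_def by metis
  \<comment> \<open>Request the \<open>j\<close>-th distinct symbol once per query asking for it.\<close>
  define ii where "ii j = e (min j d)" for j
  define a where "a j = (if j \<le> d then card (fibre (e j)) else 0) + (if j = 1 then t - card Q else 0)"
    for j
  define \<kappa> where "\<kappa> q = (inv_into {1..d} e (g q), h q)" for q
  have e_inv: "inv_into {1..d} e (g q) \<in> {1..d}" "e (inv_into {1..d} e (g q)) = g q" if "q \<in> Q" for q
    using that bij_betw_apply[OF bij_betw_inv_into[OF e]] bij_betw_inv_into_right[OF e] by auto
  have "ii j \<in> g ` Q" if "j \<in> {1..u}" for j
    using bij_betw_apply[OF e, of "min j d"] that d by (simp add: ii_def)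
  then have "\<forall>j\<in>{1..u}. ii j \<in> {1..n}" using assms(5) by blast
  moreover have "(\<Sum>j=1..u. a j) = t"
  proof -
    have "(\<Sum>j=1..u. if j \<le> d then card (fibre (e j)) else 0) = (\<Sum>j=1..d. card (fibre (e j)))"
      using d by (intro sum.mono_neutral_cong_right) auto
    also have "\<dots> = (\<Sum>z\<in>g ` Q. card (fibre z))"
      using sum.reindex_bij_betw[OF e] by simp
    also have "\<dots> = card Q" unfolding fibre_def by (rule sum_card_fibres[OF fin])
    finally show ?thesis using d assms(3) by (simp add: a_def sum.distrib)
  qed
  ultimately obtain R where R: "disjoint_recovering_sets N C (ii \<circ> fst) (SIGMA j:{1..u}. {1..a j}) R"
    using bc unfolding batch_code_iff by blast
  have "inj_on \<kappa> Q"
    using inj e_inv(2) unfolding \<kappa>_def inj_on_def by (metis prod.inject)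
  moreover have "\<kappa> ` Q \<subseteq> (SIGMA j:{1..u}. {1..a j})"
    using e_inv h d by (force simp: \<kappa>_def a_def)
  moreover have "(ii \<circ> fst) (\<kappa> q) = g q" if "q \<in> Q" for q
    using e_inv[OF that] by (simp add: \<kappa>_def ii_def)
  ultimately show ?thesis using disjoint_recovering_sets_reindex[OF R] by blast
qed

lemma recovering_set_transport:
  fixes C0 C :: "'a::field list set"
  assumes rec: "recovering_set N0 C0 i R0"
    and shadow: "\<And>c. c \<in> C \<Longrightarrow> \<exists>y\<in>C0. (\<forall>k\<in>U. y ! (k - 1) = c ! (\<phi> k - 1)) \<and>
                                         (\<forall>k\<in>{1..N0} - U. y ! (k - 1) = 0)"
    and inj: "inj_on \<phi> U" and img: "\<phi> ` U \<subseteq> {1..N}" and i: "i \<in> U"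
  shows "recovering_set N C (\<phi> i) (\<phi> ` (R0 \<inter> U))"
proof -
  obtain lam where R0: "R0 \<subseteq> {1..N0}" and lam: "\<forall>y\<in>C0. y ! (i - 1) = (\<Sum>k\<in>R0. lam k * y ! (k - 1))"
    using rec unfolding recovering_set_def by blast
  have fin: "finite R0" using R0 finite_subset by blast
  have inj': "inj_on \<phi> (R0 \<inter> U)" using inj by (rule inj_on_subset) blast
  have "c ! (\<phi> i - 1) = (\<Sum>k'\<in>\<phi> ` (R0 \<inter> U). lam (inv_into (R0 \<inter> U) \<phi> k') * c ! (k' - 1))"
    if c: "c \<in> C" for c
  proof -
    obtain y where y: "y \<in> C0" "\<forall>k\<in>U. y ! (k - 1) = c ! (\<phi> k - 1)"
      "\<forall>k\<in>{1..N0} - U. y ! (k - 1) = 0"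
      using shadow[OF c] by blast
    have "c ! (\<phi> i - 1) = y ! (i - 1)" using y(2) i by simp
    also have "\<dots> = (\<Sum>k\<in>R0. lam k * y ! (k - 1))" using lam y(1) by blast
    also have "\<dots> = (\<Sum>k\<in>R0 \<inter> U. lam k * y ! (k - 1))"
      using fin R0 y(3) by (intro sum.mono_neutral_right) auto
    also have "\<dots> = (\<Sum>k\<in>R0 \<inter> U. lam k * c ! (\<phi> k - 1))" using y(2) by simp
    also have "\<dots> = (\<Sum>k'\<in>\<phi> ` (R0 \<inter> U). lam (inv_into (R0 \<inter> U) \<phi> k') * c ! (k' - 1))"
      by (simp add: sum.reindex[OF inj'] inv_into_f_f[OF inj'])
    finally show ?thesis .
  qed
  moreover have "\<phi> ` (R0 \<inter> U) \<subseteq> {1..N}" using img by blast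
  ultimately show ?thesis unfolding recovering_set_def
    by (intro conjI exI[of _ "\<lambda>k'. lam (inv_into (R0 \<inter> U) \<phi> k')"] ballI)
qed

lemma disjoint_recovering_sets_transport:
  fixes C0 C :: "'a::field list set"
  assumes rec: "disjoint_recovering_sets N0 C0 g0 Q R0"
    and shadow: "\<And>c. c \<in> C \<Longrightarrow> \<exists>y\<in>C0. (\<forall>k\<in>U. y ! (k - 1) = c ! (\<phi> k - 1)) \<and>
                                         (\<forall>k\<in>{1..N0} - U. y ! (k - 1) = 0)"
    and inj: "inj_on \<phi> U" and img: "\<phi> ` U \<subseteq> {1..N}"
    and lift: "\<And>q. q \<in> Q \<Longrightarrow> g0 q \<in> U \<and> \<phi> (g0 q) = g q"
  shows "disjoint_recovering_sets N C g Q (\<lambda>q. \<phi> ` (R0 q \<inter> U))"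
  unfolding disjoint_recovering_sets_def disjoint_family_on_def
proof (intro conjI ballI impI)
  fix q assume q: "q \<in> Q"
  have "recovering_set N0 C0 (g0 q) (R0 q)"
    using rec q unfolding disjoint_recovering_sets_def by blast
  then have "recovering_set N C (\<phi> (g0 q)) (\<phi> ` (R0 q \<inter> U))"
    using recovering_set_transport[OF _ shadow inj img] lift[OF q] by blast
  then show "recovering_set N C (g q) (\<phi> ` (R0 q \<inter> U))" using lift[OF q] by simp
next
  fix q q' assume "q \<in> Q" "q' \<in> Q" "q \<noteq> q'"
  then have "R0 q \<inter> R0 q' = {}"
    using rec unfolding disjoint_recovering_sets_def disjoint_family_on_def by blast
  then show "\<phi> ` (R0 q \<inter> U) \<inter> \<phi> ` (R0 q' \<inter> U) = {}"
    using inj_on_image_Int[OF inj, of "R0 q \<inter> U" "R0 q' \<inter> U"] by auto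
qed

lemma disjoint_recovering_sets_combine:
  assumes "\<And>q. q \<in> Q \<Longrightarrow> p q \<in> J"
    and rec: "\<And>j. j \<in> J \<Longrightarrow> disjoint_recovering_sets N C g {q\<in>Q. p q = j} (R j)"
    and sub: "\<And>j q. j \<in> J \<Longrightarrow> q \<in> Q \<Longrightarrow> p q = j \<Longrightarrow> R j q \<subseteq> D j"
    and "disjoint_family_on D J"
  shows "disjoint_recovering_sets N C g Q (\<lambda>q. R (p q) q)"
  unfolding disjoint_recovering_sets_def disjoint_family_on_def
proof (intro conjI ballI impI)
  fix q assume "q \<in> Q"
  then show "recovering_set N C (g q) (R (p q) q)"
    using assms(1) rec unfolding disjoint_recovering_sets_def by blast
next
  fix q q' assume q: "q \<in> Q" "q' \<in> Q" "q \<noteq> q'"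
  show "R (p q) q \<inter> R (p q') q' = {}"
  proof (cases "p q = p q'")
    case True
    then show ?thesis
      using q assms(1) rec[of "p q"] unfolding disjoint_recovering_sets_def disjoint_family_on_def
      by auto
  next
    case False
    then have "D (p q) \<inter> D (p q') = {}" using q assms(1,4) unfolding disjoint_family_on_def by blast
    then show ?thesis using sub q assms(1) by blast
  qed
qed

section \<open>The construction\<close>

locale batch_construction =
  fixes n n0 r0 v S :: nat and Ps :: "nat \<Rightarrow> nat \<Rightarrow> nat set"
    and C0 :: "'a::field list set" and E0 :: "'a list \<Rightarrow> 'a list"
  assumes systematic_C0: "systematic (n0 + r0) n0 C0"
    and encoder: "\<forall>x. length x = n0 \<longrightarrow> length (E0 x) = r0 \<and> x @ E0 x \<in> C0"
    and partitions: "\<forall>i\<in>{1..S}. v_partition n v (Ps i)"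
    and card_parts: "\<forall>i\<in>{1..S}. \<forall>j\<in>{1..v}. card (Ps i j) \<le> n0"
begin

abbreviation E :: "'a list \<Rightarrow> 'a list" where
  "E \<equiv> construct_encoder n0 v S Ps E0"

abbreviation C :: "'a list set" where
  "C \<equiv> {x @ E x | x. length x = n}"

definition part_input :: "nat \<Rightarrow> nat \<Rightarrow> 'a list \<Rightarrow> 'a list" where
  "part_input i j x = pad_zeros n0 (restrict_vec x (Ps i j))"

lemma part_subset: "i \<in> {1..S} \<Longrightarrow> j \<in> {1..v} \<Longrightarrow> Ps i j \<subseteq> {1..n}"
  using partitions unfolding v_partition_def by blast

lemma finite_part: "i \<in> {1..S} \<Longrightarrow> j \<in> {1..v} \<Longrightarrow> finite (Ps i j)"
  using part_subset finite_subset by blast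

lemma length_part_input: "i \<in> {1..S} \<Longrightarrow> j \<in> {1..v} \<Longrightarrow> length (part_input i j x) = n0"
  unfolding part_input_def using card_parts finite_part
  by (simp add: length_pad_zeros length_restrict_vec)

lemma length_E0_part_input: "i \<in> {1..S} \<Longrightarrow> j \<in> {1..v} \<Longrightarrow> length (E0 (part_input i j x)) = r0"
  using encoder length_part_input by blast

lemma part_input_add:
  assumes "i \<in> {1..S}" "j \<in> {1..v}" "length x = n" "length y = n"
  shows "part_input i j (map2 (+) x y) = map2 (+) (part_input i j x) (part_input i j y)"
  unfolding part_input_def using assms part_subset finite_part
  by (simp add: restrict_vec_map2 pad_zeros_map2 length_restrict_vec)

lemma part_input_scale:
  assumes "i \<in> {1..S}" "j \<in> {1..v}" "length x = n"
  shows "part_input i j (map ((*) a) x) = map ((*) a) (part_input i j x)"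
  unfolding part_input_def using assms part_subset
  by (simp add: restrict_vec_map pad_zeros_map)

definition encoder_row :: "nat \<Rightarrow> 'a list \<Rightarrow> 'a list" where
  "encoder_row i x = concat (map (\<lambda>j. E0 (part_input i j x)) [1..<v+1])"

lemma E_rows: "E x = concat (map (\<lambda>i. encoder_row i x) [1..<S+1])"
proof -
  have "concat (concat xss) = concat (map concat xss)" for xss :: "'a list list list"
    by (induct xss) auto
  then show ?thesis
    unfolding construct_encoder_def encoder_row_def part_input_def
    by (simp only: map_map o_def concat_map_singleton)
qed

lemma length_encoder_row: "i \<in> {1..S} \<Longrightarrow> length (encoder_row i x) = v * r0"
  unfolding encoder_row_def
  by (subst length_concat_const[where r = r0]) (auto simp: set_upt_1 length_E0_part_input)

lemma length_E: "length (E x) = v * S * r0"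
  unfolding E_rows
  by (subst length_concat_const[where r = "v * r0"]) (auto simp: set_upt_1 length_encoder_row)

lemma encoder_row_add:
  assumes "i \<in> {1..S}" "length x = n" "length y = n"
  shows "encoder_row i (map2 (+) x y) = map2 (+) (encoder_row i x) (encoder_row i y)"
proof -
  have "E0 (part_input i j (map2 (+) x y)) = map2 (+) (E0 (part_input i j x)) (E0 (part_input i j y))"
    if "j \<in> set [1..<v+1]" for j
  proof -
    have "j \<in> {1..v}" using that by auto
    then show ?thesis using assms encoder length_part_input
      by (simp add: part_input_add systematic_encoder_add[OF systematic_C0])
  qed
  then have "encoder_row i (map2 (+) x y) =
      concat (map (\<lambda>j. map2 (+) (E0 (part_input i j x)) (E0 (part_input i j y))) [1..<v+1])"
    unfolding encoder_row_def by (intro arg_cong[where f = concat] map_cong refl)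
  also have "\<dots> = map2 (+) (encoder_row i x) (encoder_row i y)"
    unfolding encoder_row_def using assms(1)
    by (intro map2_concat_map[symmetric]) (auto simp: length_E0_part_input)
  finally show ?thesis .
qed

lemma E_add:
  assumes "length x = n" "length y = n"
  shows "E (map2 (+) x y) = map2 (+) (E x) (E y)"
proof -
  have "E (map2 (+) x y) = concat (map (\<lambda>i. map2 (+) (encoder_row i x) (encoder_row i y)) [1..<S+1])"
    unfolding E_rows using assms
    by (intro arg_cong[where f = concat] map_cong refl encoder_row_add) auto
  also have "\<dots> = map2 (+) (E x) (E y)"
    unfolding E_rows by (intro map2_concat_map[symmetric]) (auto simp: length_encoder_row)
  finally show ?thesis .
qed

lemma encoder_row_scale:
  assumes "i \<in> {1..S}" "length x = n"
  shows "encoder_row i (map ((*) a) x) = map ((*) a) (encoder_row i x)"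
proof -
  have "E0 (part_input i j (map ((*) a) x)) = map ((*) a) (E0 (part_input i j x))"
    if "j \<in> set [1..<v+1]" for j
  proof -
    have "j \<in> {1..v}" using that by auto
    then show ?thesis using assms encoder length_part_input
      by (simp add: part_input_scale systematic_encoder_scale[OF systematic_C0])
  qed
  then show ?thesis
    unfolding encoder_row_def map_concat map_map o_def
    by (intro arg_cong[where f = concat] map_cong refl)
qed

lemma E_scale:
  assumes "length x = n"
  shows "E (map ((*) a) x) = map ((*) a) (E x)"
  unfolding E_rows map_concat map_map o_def using assms
  by (intro arg_cong[where f = concat] map_cong refl encoder_row_scale) auto

lemma systematic_C: "systematic (n + v * S * r0) n C"
  by (rule systematic_graph) (simp_all add: length_E E_add E_scale)

definition block_index :: "nat \<Rightarrow> nat \<Rightarrow> nat" where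
  "block_index i j = (i - 1) * v + (j - 1)"

lemma block_index_less:
  assumes "i \<in> {1..S}" "j \<in> {1..v}"
  shows "block_index i j < S * v"
proof -
  have "j - 1 < v" using assms by auto
  then have "block_index i j < (i - 1) * v + v" unfolding block_index_def by (rule add_strict_left_mono)
  also have "\<dots> = i * v" using assms by (cases i) auto
  also have "\<dots> \<le> S * v" using assms by simp
  finally show ?thesis .
qed

lemma nth_E:
  assumes "i \<in> {1..S}" "j \<in> {1..v}" "k < r0"
  shows "E x ! (block_index i j * r0 + k) = E0 (part_input i j x) ! k"
proof -
  have "j - 1 < v" using assms by auto
  then have row: "(j - 1) * r0 + k < v * r0" using assms(3) by (rule mult_add_less_mult)
  have index: "block_index i j * r0 + k = (i - 1) * (v * r0) + ((j - 1) * r0 + k)"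
    by (simp add: block_index_def algebra_simps)
  have "E x ! (block_index i j * r0 + k) = encoder_row i x ! ((j - 1) * r0 + k)"
    unfolding E_rows index using assms row
    by (subst nth_concat_const[where r = "v * r0"]) (auto simp: set_upt_1 length_encoder_row simp del: upt_Suc)
  also have "\<dots> = E0 (part_input i j x) ! k"
    unfolding encoder_row_def using assms
    by (subst nth_concat_const[where r = r0]) (auto simp: set_upt_1 length_E0_part_input simp del: upt_Suc)
  finally show ?thesis .
qed

text \<open>Coordinate \<open>m\<close> of the \<open>C\<^sub>0\<close>-codeword built from part \<open>Ps i j\<close> is coordinate
  \<open>global_coord i j m\<close> of \<open>(x, E x)\<close>, unless \<open>card (Ps i j) < m \<le> n0\<close>: those are the
  padding zeros, and they are exactly the coordinates outside \<open>local_support i j\<close>.\<close>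

definition global_coord :: "nat \<Rightarrow> nat \<Rightarrow> nat \<Rightarrow> nat" where
  "global_coord i j m =
     (if m \<le> n0 then sorted_list_of_set (Ps i j) ! (m - 1) else n + block_index i j * r0 + (m - n0))"

definition local_support :: "nat \<Rightarrow> nat \<Rightarrow> nat set" where
  "local_support i j = {1..card (Ps i j)} \<union> {n0<..n0 + r0}"

definition redundancy_coords :: "nat \<Rightarrow> nat \<Rightarrow> nat set" where
  "redundancy_coords i j = {n + block_index i j * r0 <.. n + block_index i j * r0 + r0}"

lemma global_coord_image_part:
  assumes "i \<in> {1..S}" "j \<in> {1..v}"
  shows "global_coord i j ` {1..card (Ps i j)} = Ps i j"
proof -
  let ?L = "sorted_list_of_set (Ps i j)"
  have fin: "finite (Ps i j)" and card: "card (Ps i j) \<le> n0"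
    using assms finite_part card_parts by auto
  have "global_coord i j ` {1..card (Ps i j)} = (\<lambda>m. ?L ! (m - 1)) ` {1..length ?L}"
    using fin card by (intro image_cong) (auto simp: global_coord_def)
  also have "\<dots> = set ?L" by (rule image_nth_pred_atLeastAtMost)
  finally show ?thesis using fin by simp
qed

lemma global_coord_image_redundancy:
  "global_coord i j ` {n0<..n0 + r0} = redundancy_coords i j"
proof -
  have "global_coord i j ` {n0<..n0 + r0} = (\<lambda>m. n + block_index i j * r0 + (m - n0)) ` {n0<..n0 + r0}"
    by (intro image_cong) (auto simp: global_coord_def)
  then show ?thesis unfolding redundancy_coords_def by (simp only: image_shift_greaterThanAtMost)
qed

lemma global_coord_image:
  "i \<in> {1..S} \<Longrightarrow> j \<in> {1..v} \<Longrightarrow>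
   global_coord i j ` local_support i j = Ps i j \<union> redundancy_coords i j"
  unfolding local_support_def image_Un
  using global_coord_image_part global_coord_image_redundancy by simp

lemma part_redundancy_disjoint:
  "i \<in> {1..S} \<Longrightarrow> j \<in> {1..v} \<Longrightarrow> Ps i j \<inter> redundancy_coords i' j' = {}"
proof -
  assume "i \<in> {1..S}" "j \<in> {1..v}"
  then have "Ps i j \<subseteq> {..n}" using part_subset[of i j] by auto
  moreover have "redundancy_coords i' j' \<subseteq> {n<..}" by (auto simp: redundancy_coords_def)
  moreover have "{..n} \<inter> {n<..} = {}" by auto
  ultimately show ?thesis by blast
qed

lemma inj_on_global_coord:
  assumes "i \<in> {1..S}" "j \<in> {1..v}"
  shows "inj_on (global_coord i j) (local_support i j)"
  unfolding local_support_def
proof (intro inj_on_Un[THEN iffD2] conjI)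
  let ?L = "sorted_list_of_set (Ps i j)"
  have fin: "finite (Ps i j)" and card: "card (Ps i j) \<le> n0"
    using assms finite_part card_parts by auto
  have "inj_on (\<lambda>m. ?L ! (m - 1)) {1..length ?L}"
  proof (rule inj_onI)
    fix m m' assume m: "m \<in> {1..length ?L}" "m' \<in> {1..length ?L}" and "?L ! (m - 1) = ?L ! (m' - 1)"
    then have "m - 1 = m' - 1"
      using nth_eq_iff_index_eq[OF distinct_sorted_list_of_set[of "Ps i j"], of "m - 1" "m' - 1"] by auto
    then show "m = m'" using m by auto
  qed
  moreover have "global_coord i j m = ?L ! (m - 1)" if "m \<in> {1..card (Ps i j)}" for m
    using that card by (simp add: global_coord_def)
  ultimately show "inj_on (global_coord i j) {1..card (Ps i j)}"
    using fin by (subst inj_on_cong) simp_all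
  show "inj_on (global_coord i j) {n0<..n0 + r0}"
    by (intro inj_onI) (auto simp: global_coord_def)
  have "global_coord i j ` ({1..card (Ps i j)} - {n0<..n0 + r0}) \<subseteq> Ps i j"
    using global_coord_image_part[OF assms] by blast
  moreover have "global_coord i j ` ({n0<..n0 + r0} - {1..card (Ps i j)}) \<subseteq> redundancy_coords i j"
    using global_coord_image_redundancy by blast
  ultimately show "global_coord i j ` ({1..card (Ps i j)} - {n0<..n0 + r0}) \<inter>
        global_coord i j ` ({n0<..n0 + r0} - {1..card (Ps i j)}) = {}"
    using part_redundancy_disjoint[OF assms] by blast
qed

lemma global_coord_bound:
  assumes "i \<in> {1..S}" "j \<in> {1..v}"
  shows "global_coord i j ` local_support i j \<subseteq> {1..n + v * S * r0}"
proof -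
  have "block_index i j * r0 + r0 \<le> v * S * r0"
    using mult_le_mono1[OF block_index_less[OF assms, folded Suc_le_eq], of r0] by (simp add: mult.commute)
  then have "redundancy_coords i j \<subseteq> {1..n + v * S * r0}" by (auto simp: redundancy_coords_def)
  moreover have "Ps i j \<subseteq> {1..n + v * S * r0}" using part_subset[OF assms] by auto
  ultimately show ?thesis using global_coord_image[OF assms] by simp
qed

lemma disjoint_family_global_coord:
  assumes "i \<in> {1..S}"
  shows "disjoint_family_on (\<lambda>j. global_coord i j ` local_support i j) {1..v}"
  unfolding disjoint_family_on_def
proof (intro ballI impI)
  fix j j' assume j: "j \<in> {1..v}" "j' \<in> {1..v}" "j \<noteq> j'"
  then have "block_index i j \<noteq> block_index i j'" by (auto simp: block_index_def)
  then have "redundancy_coords i j \<inter> redundancy_coords i j' = {}"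
    unfolding redundancy_coords_def by (rule disjoint_blocks)
  moreover have "Ps i j \<inter> Ps i j' = {}" using partitions assms j unfolding v_partition_def by blast
  moreover have "Ps i j \<inter> redundancy_coords i j' = {}" "Ps i j' \<inter> redundancy_coords i j = {}"
    using part_redundancy_disjoint assms j by auto
  ultimately show "global_coord i j ` local_support i j \<inter> global_coord i j' ` local_support i j' = {}"
    unfolding global_coord_image[OF assms j(1)] global_coord_image[OF assms j(2)] by blast
qed

lemma codeword_shadow:
  assumes ij: "i \<in> {1..S}" "j \<in> {1..v}" and "c \<in> C"
  shows "\<exists>y\<in>C0. (\<forall>k\<in>local_support i j. y ! (k - 1) = c ! (global_coord i j k - 1)) \<and>
                 (\<forall>k\<in>{1..n0 + r0} - local_support i j. y ! (k - 1) = 0)"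
proof -
  obtain x where x: "length x = n" "c = x @ E x" using assms(3) by blast
  define w where "w = part_input i j x"
  let ?L = "sorted_list_of_set (Ps i j)"
  have fin: "finite (Ps i j)" and card: "card (Ps i j) \<le> n0"
    using ij finite_part card_parts by auto
  have w: "length w = n0" and restrict: "length (restrict_vec x (Ps i j)) = card (Ps i j)"
    using ij fin by (simp_all add: w_def length_part_input length_restrict_vec)
  have "(w @ E0 w) ! (k - 1) = c ! (global_coord i j k - 1)" if k: "k \<in> {1..card (Ps i j)}" for k
  proof -
    have "?L ! (k - 1) \<in> set ?L" using k by (intro nth_mem) auto
    then have "?L ! (k - 1) \<in> {1..n}" using fin part_subset[OF ij] by auto
    then have "?L ! (k - 1) - 1 < length x" using x(1) by auto
    have "k - 1 < card (Ps i j)" using k by auto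
    then have "(w @ E0 w) ! (k - 1) = restrict_vec x (Ps i j) ! (k - 1)"
      using card w restrict by (simp add: nth_append w_def part_input_def nth_pad_zeros)
    also have "\<dots> = x ! (?L ! (k - 1) - 1)"
      using fin \<open>k - 1 < card (Ps i j)\<close> by (rule nth_restrict_vec)
    also have "\<dots> = c ! (global_coord i j k - 1)"
      using k card x \<open>?L ! (k - 1) - 1 < length x\<close> by (simp add: global_coord_def nth_append)
    finally show ?thesis .
  qed
  moreover have "(w @ E0 w) ! (k - 1) = c ! (global_coord i j k - 1)" if k: "k \<in> {n0<..n0 + r0}" for k
  proof -
    have "\<not> k - 1 < n0" using k by auto
    then have "(w @ E0 w) ! (k - 1) = E0 w ! (k - 1 - n0)" using w by (simp add: nth_append)
    also have "\<dots> = E x ! (block_index i j * r0 + (k - 1 - n0))"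
    proof -
      have "k - 1 - n0 < r0" using k by auto
      then show ?thesis unfolding w_def by (rule nth_E[OF ij, symmetric])
    qed
    also have "\<dots> = c ! (n + (block_index i j * r0 + (k - 1 - n0)))"
      using x by (metis nth_append_length_plus)
    also have "n + (block_index i j * r0 + (k - 1 - n0)) = global_coord i j k - 1"
      using k by (auto simp: global_coord_def)
    finally show ?thesis .
  qed
  moreover have "(w @ E0 w) ! (k - 1) = 0" if k: "k \<in> {1..n0 + r0} - local_support i j" for k
  proof -
    have "card (Ps i j) \<le> k - 1" "k - 1 < n0" using k by (auto simp: local_support_def)
    then show ?thesis using w restrict by (simp add: nth_append w_def part_input_def nth_pad_zeros)
  qed
  moreover have "w @ E0 w \<in> C0" using encoder w by blast
  ultimately show ?thesis unfolding local_support_def by blast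
qed

lemma part_requests_recover:
  assumes bc: "batch_code u t (n0 + r0) n0 C0" and ij: "i \<in> {1..S}" "j \<in> {1..v}"
    and fin: "finite Q" and card: "card Q \<le> t" and requests: "g ` Q \<subseteq> Ps i j"
    and few: "card (g ` Q) \<le> u"
  shows "\<exists>R. disjoint_recovering_sets (n + v * S * r0) C g Q R \<and>
             (\<forall>q\<in>Q. R q \<subseteq> global_coord i j ` local_support i j)"
proof -
  define g0 where "g0 q = inv_into (local_support i j) (global_coord i j) (g q)" for q
  have lift: "g0 q \<in> local_support i j \<and> global_coord i j (g0 q) = g q" if "q \<in> Q" for q
  proof -
    have "g q \<in> global_coord i j ` local_support i j"
      using that requests global_coord_image[OF ij] by auto
    then show ?thesis unfolding g0_def by (simp add: inv_into_into f_inv_into_f)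
  qed
  have "g0 ` Q \<subseteq> {1..n0}"
  proof
    fix m assume "m \<in> g0 ` Q"
    then obtain q where q: "q \<in> Q" "m = g0 q" by blast
    then have "global_coord i j m \<in> Ps i j" using lift requests by auto
    then have "global_coord i j m \<le> n" using part_subset[OF ij] by auto
    moreover have "m \<in> local_support i j" using lift q by simp
    ultimately show "m \<in> {1..n0}"
      using card_parts ij by (auto simp: local_support_def global_coord_def split: if_splits)
  qed
  moreover have "card (g0 ` Q) \<le> u"
    using card_image_le[of "g ` Q" "inv_into (local_support i j) (global_coord i j)"] fin few
    unfolding g0_def image_image by simp
  ultimately obtain R0 where "disjoint_recovering_sets (n0 + r0) C0 g0 Q R0"
    using batch_code_recovers[OF bc fin card] by blast
  then have "disjoint_recovering_sets (n + v * S * r0) C g Q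
               (\<lambda>q. global_coord i j ` (R0 q \<inter> local_support i j))"
    by (rule disjoint_recovering_sets_transport[OF _ codeword_shadow[OF ij]
          inj_on_global_coord[OF ij] global_coord_bound[OF ij] lift])
  then show ?thesis by blast
qed

lemma covering_partition_recovers:
  assumes bc: "batch_code u t (n0 + r0) n0 C0" and i: "i \<in> {1..S}"
    and fin: "finite Q" and card: "card Q \<le> t" and requests: "g ` Q \<subseteq> {1..n}"
    and few: "\<And>j. j \<in> {1..v} \<Longrightarrow> card (g ` Q \<inter> Ps i j) \<le> u"
  shows "\<exists>R. disjoint_recovering_sets (n + v * S * r0) C g Q R"
proof -
  define p where "p q = (SOME j. j \<in> {1..v} \<and> g q \<in> Ps i j)" for q
  have p: "p q \<in> {1..v} \<and> g q \<in> Ps i (p q)" if "q \<in> Q" for q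
  proof -
    have "\<exists>j. j \<in> {1..v} \<and> g q \<in> Ps i j"
      using that requests partitions i unfolding v_partition_def by blast
    then show ?thesis unfolding p_def by (rule someI_ex)
  qed
  define serves where "serves j R \<longleftrightarrow>
      disjoint_recovering_sets (n + v * S * r0) C g {q\<in>Q. p q = j} R \<and>
      (\<forall>q\<in>{q\<in>Q. p q = j}. R q \<subseteq> global_coord i j ` local_support i j)" for j R
  have "\<exists>R. serves j R" if j: "j \<in> {1..v}" for j
    unfolding serves_def
  proof (rule part_requests_recover[OF bc i j])
    show "finite {q\<in>Q. p q = j}" using fin by simp
    show "card {q\<in>Q. p q = j} \<le> t" using card_mono[OF fin, of "{q\<in>Q. p q = j}"] card by auto
    show "g ` {q\<in>Q. p q = j} \<subseteq> Ps i j" using p by auto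
    have "card (g ` {q\<in>Q. p q = j}) \<le> card (g ` Q \<inter> Ps i j)"
      using p fin by (intro card_mono) auto
    then show "card (g ` {q\<in>Q. p q = j}) \<le> u" using few[OF j] by simp
  qed
  then obtain R where R: "\<And>j. j \<in> {1..v} \<Longrightarrow> serves j (R j)"
    using bchoice[of "{1..v}" serves] by blast
  have "disjoint_recovering_sets (n + v * S * r0) C g Q (\<lambda>q. R (p q) q)"
  proof (rule disjoint_recovering_sets_combine[where J = "{1..v}"
        and D = "\<lambda>j. global_coord i j ` local_support i j"])
    show "p q \<in> {1..v}" if "q \<in> Q" for q using p[OF that] by blast
    show "disjoint_recovering_sets (n + v * S * r0) C g {q\<in>Q. p q = j} (R j)"
      if "j \<in> {1..v}" for j
      using R[OF that] unfolding serves_def by blast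
    show "R j q \<subseteq> global_coord i j ` local_support i j"
      if "j \<in> {1..v}" "q \<in> Q" "p q = j" for j q
      using R[OF that(1)] that(2,3) unfolding serves_def by blast
  qed (rule disjoint_family_global_coord[OF i])
  then show ?thesis by blast
qed

lemma complete_collection_recovers:
  assumes bc: "batch_code u t (n0 + r0) n0 C0" and complete: "u_complete n u v S Ps"
    and "u * v \<le> n" and "finite Q" and "card Q \<le> t" and requests: "g ` Q \<subseteq> {1..n}"
    and "card (g ` Q) \<le> u * v"
  shows "\<exists>R. disjoint_recovering_sets (n + v * S * r0) C g Q R"
proof -
  obtain I where I: "g ` Q \<subseteq> I" "I \<subseteq> {1..n}" "card I = u * v"
    using exists_subset_between[OF assms(7) _ requests] assms(3) by auto
  then obtain i where i: "i \<in> {1..S}" "covers u v (Ps i) I"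
    using complete unfolding u_complete_def by blast
  have "card (g ` Q \<inter> Ps i j) \<le> u" if "j \<in> {1..v}" for j
  proof -
    have "card (g ` Q \<inter> Ps i j) \<le> card (Ps i j \<inter> I)"
      using I finite_subset[OF I(2)] by (intro card_mono) auto
    then show ?thesis using i that unfolding covers_def by simp
  qed
  then show ?thesis using covering_partition_recovers[OF bc i(1) assms(4,5) requests] by blast
qed

end

lemma nat_ceiling_div_mult_ge:
  assumes "0 < v"
  shows "s \<le> nat \<lceil>real s / real v\<rceil> * (v::nat)"
  using assms
  by (metis (no_types, lifting) ceiling_divide_upper divide_nonneg_nonneg
      of_nat_0_le_iff of_nat_0_less_iff of_nat_int_ceiling of_nat_le_iff of_nat_mult)

theorem theorem4:
  fixes n v s t u n0 S r0 :: nat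
    and Ps :: "nat \<Rightarrow> nat \<Rightarrow> nat set"
    and C0 :: "('a::{field,finite}) list set"
    and E0 :: "'a list \<Rightarrow> 'a list"
  assumes "1 \<le> v" "v \<le> s" "s \<le> t" "t \<le> n"
    and "u = nat \<lceil>real s / real v\<rceil>"
    and "u * v \<le> n"
    and "n0 = n - u * (v - 1)"
    and "u_complete n u v S Ps"
    and "\<forall>i\<in>{1..S}. \<forall>j\<in>{1..v}. card (Ps i j) \<le> n0"
    and "batch_code u t (n0 + r0) n0 C0"
    and "\<forall>x. length x = n0 \<longrightarrow> length (E0 x) = r0 \<and> x @ E0 x \<in> C0"
  shows "batch_code s t (n + v * S * r0) n
           {x @ construct_encoder n0 v S Ps E0 x | x. length x = n}"
proof -
  interpret batch_construction n n0 r0 v S Ps C0 E0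
  proof
    show "systematic (n0 + r0) n0 C0" using assms(10) unfolding batch_code_def by blast
    show "\<forall>i\<in>{1..S}. v_partition n v (Ps i)" using assms(8) unfolding u_complete_def by blast
  qed (use assms(9,11) in blast)+
  have "s \<le> u * v" using assms(1,5) nat_ceiling_div_mult_ge[of v s] by simp
  show ?thesis
  proof (rule batch_codeI)
    show "1 \<le> s" "s \<le> t" using assms(1-3) by simp_all
    show "systematic (n + v * S * r0) n C" by (rule systematic_C)
    fix Q :: "(nat \<times> nat) set" and g
    assume "finite Q" "card Q \<le> t" "card (g ` Q) \<le> s" "g ` Q \<subseteq> {1..n}"
    with \<open>s \<le> u * v\<close> show "\<exists>R. disjoint_recovering_sets (n + v * S * r0) C g Q R"
      by (intro complete_collection_recovers[OF assms(10,8,6)]) simp_all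
  qed
qed

end
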